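(* Let $\alpha>0$ and $\varphi\in BMO$. Then $T_\varphi$ is bounded on $F^\infty_\alpha$ if and only if $\tilde{\varphi}_t\in L^\infty(\mathbb{C},dA)$ for every $t>0$.
   Context: $BMO$ denotes the space of locally integrable functions $\varphi$ on $\mathbb{C}$ with $\sup_{z\in\mathbb{C}}\frac{1}{|B(z,r)|}\int_{B(z,r)}|\varphi(w)-\hat\varphi_r(z)|\,dA(w)<\infty$, where $\hat\varphi_r(z)$ is the average of $\varphi$ over the disc $B(z,r)$ (the space does not depend on $r>0$). $d\lambda_\alpha(w)=\frac{\alpha}{\pi}e^{-\alpha|w|^2}dA(w)$, $K_z(w)=e^{\alpha\bar z w}$. $F^\infty_\alpha$ is the space of entire $f$ with $\|f\|_{\infty,\alpha}=\sup_z|f(z)|e^{-\alpha|z|^2/2}<\infty$. $T_\varphi f(z)=\int_{\mathbb{C}}\varphi(w)f(w)\overline{K_z(w)}\,d\lambda_\alpha(w)$. $\tilde{\varphi}_t(z)=\frac{\alpha}{\pi}\int_{\mathbb{C}}\varphi(w)e^{-\alpha t|z-w|^2/2}\,dA(w)$. *)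

theory Defs
  imports "HOL-Analysis.Analysis"
begin

definition locally_integrable :: "(complex \<Rightarrow> complex) \<Rightarrow> bool" where
  "locally_integrable \<phi> \<longleftrightarrow> (\<forall>z r. set_integrable lborel (cball z r) \<phi>)"

definition disc_avg :: "(complex \<Rightarrow> complex) \<Rightarrow> real \<Rightarrow> complex \<Rightarrow> complex" where
  "disc_avg \<phi> r z = (set_lebesgue_integral lborel (ball z r) \<phi>) / of_real (measure lborel (ball z r))"

text \<open>BMO (defined with radius r = 1; the space does not depend on r > 0).\<close>
definition BMO :: "(complex \<Rightarrow> complex) set" where
  "BMO = {\<phi>. locally_integrable \<phi> \<and>
     (\<exists>C. \<forall>z. (set_lebesgue_integral lborel (ball z 1) (\<lambda>w. norm (\<phi> w - disc_avg \<phi> 1 z)))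
                / measure lborel (ball z 1) \<le> C)}"

definition fock_inf :: "real \<Rightarrow> (complex \<Rightarrow> complex) set" where
  "fock_inf \<alpha> = {f. f holomorphic_on UNIV \<and>
      (\<exists>C. \<forall>z. norm (f z) * exp (- \<alpha> * (cmod z)\<^sup>2 / 2) \<le> C)}"

definition fock_inf_norm :: "real \<Rightarrow> (complex \<Rightarrow> complex) \<Rightarrow> real" where
  "fock_inf_norm \<alpha> f = (SUP z. norm (f z) * exp (- \<alpha> * (cmod z)\<^sup>2 / 2))"

definition fock_kernel :: "real \<Rightarrow> complex \<Rightarrow> complex \<Rightarrow> complex" where
  "fock_kernel \<alpha> z w = exp (of_real \<alpha> * cnj z * w)"

text \<open>Integrand of T_\<phi> f (z) against dA, with d\<lambda>_\<alpha> = (\<alpha>/\<pi>) e^{-\<alpha>|w|^2} dA.\<close>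
definition toeplitz_integrand ::
  "real \<Rightarrow> (complex \<Rightarrow> complex) \<Rightarrow> (complex \<Rightarrow> complex) \<Rightarrow> complex \<Rightarrow> complex \<Rightarrow> complex" where
  "toeplitz_integrand \<alpha> \<phi> f z w =
     \<phi> w * f w * cnj (fock_kernel \<alpha> z w) * of_real (\<alpha> / pi * exp (- \<alpha> * (cmod w)\<^sup>2))"

definition toeplitz :: "real \<Rightarrow> (complex \<Rightarrow> complex) \<Rightarrow> (complex \<Rightarrow> complex) \<Rightarrow> complex \<Rightarrow> complex" where
  "toeplitz \<alpha> \<phi> f z = integral\<^sup>L lborel (toeplitz_integrand \<alpha> \<phi> f z)"

definition toeplitz_bounded_fock_inf :: "real \<Rightarrow> (complex \<Rightarrow> complex) \<Rightarrow> bool" where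
  "toeplitz_bounded_fock_inf \<alpha> \<phi> \<longleftrightarrow>
     (\<exists>C. \<forall>f \<in> fock_inf \<alpha>.
        (\<forall>z. integrable lborel (toeplitz_integrand \<alpha> \<phi> f z)) \<and>
        toeplitz \<alpha> \<phi> f \<in> fock_inf \<alpha> \<and>
        fock_inf_norm \<alpha> (toeplitz \<alpha> \<phi> f) \<le> C * fock_inf_norm \<alpha> f)"

definition heat_transform :: "real \<Rightarrow> (complex \<Rightarrow> complex) \<Rightarrow> real \<Rightarrow> complex \<Rightarrow> complex" where
  "heat_transform \<alpha> \<phi> t z =
     of_real (\<alpha> / pi) * integral\<^sup>L lborel (\<lambda>w. \<phi> w * of_real (exp (- \<alpha> * t * (cmod (z - w))\<^sup>2 / 2)))"

definition Linf :: "(complex \<Rightarrow> complex) \<Rightarrow> bool" where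
  "Linf g \<longleftrightarrow> g \<in> borel_measurable lborel \<and> (\<exists>C. AE z in lborel. norm (g z) \<le> C)"

end

theory Submission
  imports Defs "HOL-Probability.Distributions"
begin

text \<open>Let \<open>a(z)\<close> be the average of \<open>\<phi>\<close> over the unit disc \<open>B(z, 1)\<close>. For \<open>\<phi>\<close> in BMO,
  chaining discs of radius 1/2 gives \<open>|a(z) - a(w)| \<le> const (1 + |z - w|)\<close>, and covering the plane by
  unit discs shows that \<open>|\<phi>(w) - a(z)|\<close> is integrable against every Gaussian centred at \<open>z\<close>,
  uniformly in \<open>z\<close>. Hence for every \<open>t > 0\<close> the heat transform \<open>\<phi>~\<^sub>t\<close> differs from \<open>(2/t) a\<close> by a
  bounded function, and each \<open>\<phi>~\<^sub>t\<close> is bounded iff \<open>a\<close> is.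

  Testing \<open>T\<^sub>\<phi>\<close> on the reproducing kernels gives \<open>T\<^sub>\<phi> K\<^sub>z (z) = e\<^bsup>\<alpha>|z|\<^sup>2\<^esup> \<phi>~\<^sub>2(z)\<close>, so a bounded
  \<open>T\<^sub>\<phi>\<close> forces \<open>\<phi>~\<^sub>2\<close>, hence \<open>a\<close>, to be bounded. Conversely, if \<open>a\<close> is bounded then so are the Gaussian
  averages \<open>\<integral> |\<phi>(w)| e\<^bsup>-\<alpha>|z-w|\<^sup>2/2\<^esup> dA(w)\<close>, and these dominate \<open>|T\<^sub>\<phi> f(z)| e\<^bsup>-\<alpha>|z|\<^sup>2/2\<^esup>\<close>;
  holomorphy of \<open>T\<^sub>\<phi> f\<close> follows by expanding the kernel into its power series.\<close>

lemma set_integral_nonneg: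
  fixes f :: "'a \<Rightarrow> real"
  shows "(\<And>x. x \<in> A \<Longrightarrow> f x \<ge> 0) \<Longrightarrow> (\<integral>x\<in>A. f x \<partial>M) \<ge> 0"
  unfolding set_lebesgue_integral_def by (intro integral_nonneg_AE) (auto simp: indicator_def)

lemma set_integral_mono_set:
  fixes f :: "'a \<Rightarrow> real"
  assumes "set_integrable M A f" "B \<in> sets M" "B \<subseteq> A" "\<And>x. x \<in> A \<Longrightarrow> f x \<ge> 0"
  shows "(\<integral>x\<in>B. f x \<partial>M) \<le> (\<integral>x\<in>A. f x \<partial>M)"
  using assms set_integrable_subset[OF assms(1-3)]
  unfolding set_lebesgue_integral_def set_integrable_def
  by (intro integral_mono) (auto simp: indicator_def)

lemma set_nn_integral_eq_set_integral:
  fixes f :: "'a \<Rightarrow> real"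
  assumes "set_integrable M A f" "\<And>x. x \<in> A \<Longrightarrow> f x \<ge> 0"
  shows "(\<integral>\<^sup>+x\<in>A. ennreal (f x) \<partial>M) = ennreal (\<integral>x\<in>A. f x \<partial>M)"
  using assms unfolding set_lebesgue_integral_def set_integrable_def nn_integral_set_ennreal
  by (subst nn_integral_eq_integral) (auto simp: indicator_def mult_ac)

lemma AE_lborel_imp_ex_in_ball:
  fixes x :: "'a::euclidean_space"
  assumes "AE y in lborel. P y" and "r > 0"
  shows "\<exists>y\<in>ball x r. P y"
proof (rule ccontr)
  assume "\<not> (\<exists>y\<in>ball x r. P y)"
  with assms(1) have "AE y in lborel. y \<notin> ball x r"
    by (auto elim: eventually_mono)
  then have "ball x r \<in> null_sets lborel"
    by (subst AE_iff_null_sets) auto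
  then show False
    using emeasure_ball[where c = x and r = r] unit_ball_vol_pos[of "real DIM('a)"] assms(2)
    by (simp add: null_sets_def)
qed

lemma Linf_if_bounded:
  "g \<in> borel_measurable lborel \<Longrightarrow> bounded (range g) \<Longrightarrow> Linf g"
  unfolding Linf_def bounded_iff by auto

lemma borel_measurable_cnj [measurable]: "cnj \<in> borel_measurable borel"
  by (intro borel_measurable_continuous_onI continuous_intros)

lemma integrable_lborel_translate_iff:
  fixes f :: "'a::euclidean_space \<Rightarrow> 'b::{banach, second_countable_topology}"
  assumes [measurable]: "f \<in> borel_measurable borel"
  shows "integrable lborel (\<lambda>x. f (c + x)) \<longleftrightarrow> integrable lborel f"
  by (subst (2) lborel_distr_plus[of c, symmetric], subst integrable_distr_eq) auto

lemma integral_lborel_translate: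
  fixes f :: "'a::euclidean_space \<Rightarrow> 'b::{banach, second_countable_topology}"
  assumes [measurable]: "f \<in> borel_measurable borel"
  shows "(\<integral>x. f (c + x) \<partial>lborel) = (\<integral>x. f x \<partial>lborel)"
  by (subst (2) lborel_distr_plus[of c, symmetric], subst integral_distr) auto

lemma
  fixes h :: "real \<Rightarrow> real" and z :: "'a::euclidean_space"
  assumes [measurable]: "h \<in> borel_measurable borel"
  shows integrable_radial_translate_iff:
      "integrable lborel (\<lambda>w. h (norm (z - w))) \<longleftrightarrow> integrable lborel (\<lambda>w::'a. h (norm w))"
    and integral_radial_translate:
      "(\<integral>w. h (norm (z - w)) \<partial>lborel) = (\<integral>w. h (norm w) \<partial>(lborel :: 'a measure))"
  using integrable_lborel_translate_iff[of "\<lambda>w. h (norm w)" "- z"]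
    integral_lborel_translate[of "\<lambda>w. h (norm w)" "- z"]
  by (simp_all add: norm_minus_commute)

lemma measure_ball_complex: "r \<ge> 0 \<Longrightarrow> measure lborel (ball (z::complex) r) = pi * r\<^sup>2"
  by (simp add: content_ball eval_unit_ball_vol)

lemma emeasure_ball_complex: "r \<ge> 0 \<Longrightarrow> emeasure lborel (ball (z::complex) r) = ennreal (pi * r\<^sup>2)"
  by (simp add: emeasure_ball eval_unit_ball_vol)

section \<open>Gaussian integrals on the plane\<close>

lemma has_bochner_integral_exp_neg_square:
  fixes c :: real assumes "c > 0"
  shows "has_bochner_integral lborel (\<lambda>x::real. exp (- c * x\<^sup>2)) (sqrt (pi / c))"
proof -
  define s where "s = sqrt (1 / (2 * c))"
  have s: "s > 0" "2 * s\<^sup>2 = 1 / c" using assms by (simp_all add: s_def)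
  have "exp (- c * x\<^sup>2) = sqrt (pi / c) * normal_density 0 s x" for x
  proof -
    have "(x - 0)\<^sup>2 / (2 * s\<^sup>2) = c * x\<^sup>2" "2 * pi * s\<^sup>2 = pi / c"
      using s assms by (simp_all add: field_simps)
    then show ?thesis using assms unfolding normal_density_def by simp
  qed
  moreover have "has_bochner_integral lborel (\<lambda>x. sqrt (pi / c) * normal_density 0 s x) (sqrt (pi / c) * 1)"
    using s(1) by (intro has_bochner_integral_mult_right) (simp add: has_bochner_integral_iff)
  ultimately show ?thesis by simp
qed

lemma has_bochner_integral_gaussian_complex:
  fixes c :: real assumes "c > 0"
  shows "has_bochner_integral lborel (\<lambda>w::complex. exp (- c * (cmod w)\<^sup>2)) (pi / c)"
proof (rule has_bochner_integral_nn_integral)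
  have split: "ennreal (exp (- c * (cmod w)\<^sup>2)) = (\<Prod>b\<in>Basis. ennreal (exp (- c * (w \<bullet> b)\<^sup>2)))"
    for w :: complex
    by (simp add: cmod_power2 Basis_complex_def inner_complex_def algebra_simps
        flip: exp_add ennreal_mult)
  have line: "(\<integral>\<^sup>+x. ennreal (exp (- c * x\<^sup>2)) \<partial>lborel) = ennreal (sqrt (pi / c))"
    using has_bochner_integral_exp_neg_square[OF assms]
    by (intro nn_integral_eq_integral[THEN trans]) (auto simp: has_bochner_integral_iff)
  have "(\<integral>\<^sup>+w. ennreal (exp (- c * (cmod w)\<^sup>2)) \<partial>lborel)
      = (\<Prod>b\<in>(Basis::complex set). \<integral>\<^sup>+x. ennreal (exp (- c * x\<^sup>2)) \<partial>lborel)"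
    unfolding split by (rule nn_integral_lborel_prod) auto
  also have "\<dots> = ennreal (pi / c)"
    unfolding line using assms by (simp add: Basis_complex_def flip: ennreal_mult)
  finally show "(\<integral>\<^sup>+w. ennreal (exp (- c * (cmod w)\<^sup>2)) \<partial>lborel) = ennreal (pi / c)" .
qed (use assms in auto)

lemma
  fixes c :: real assumes "c > 0"
  shows integrable_gaussian_translate: "integrable lborel (\<lambda>w. exp (- c * (cmod (z - w))\<^sup>2))"
    and integral_gaussian_translate: "(\<integral>w. exp (- c * (cmod (z - w))\<^sup>2) \<partial>lborel) = pi / c"
  using has_bochner_integral_gaussian_complex[OF assms]
    integrable_radial_translate_iff[of "\<lambda>r. exp (- c * r\<^sup>2)" z]
    integral_radial_translate[of "\<lambda>r. exp (- c * r\<^sup>2)" z]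
  by (auto simp: has_bochner_integral_iff)

lemma nn_integral_gaussian_translate:
  assumes "c > 0"
  shows "(\<integral>\<^sup>+w. ennreal (exp (- c * (cmod (z - w))\<^sup>2)) \<partial>lborel) = ennreal (pi / c)"
  using integrable_gaussian_translate[OF assms] integral_gaussian_translate[OF assms]
  by (subst nn_integral_eq_integral) auto

lemma exp_gaussian_shift_le:
  fixes z u w :: "'a::real_normed_vector"
  assumes "dist u w < 1" and "c \<ge> 0"
  shows "exp (- c * (norm (z - u))\<^sup>2) \<le> exp c * exp (- (c / 2) * (norm (z - w))\<^sup>2)"
proof -
  have "norm (z - w) \<le> norm (z - u) + 1"
    using norm_triangle_ineq[of "z - u" "u - w"] assms(1) by (simp add: dist_norm)
  then have "(norm (z - w))\<^sup>2 \<le> (norm (z - u) + 1)\<^sup>2"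
    by (intro power_mono) auto
  also have "\<dots> \<le> 2 * (norm (z - u))\<^sup>2 + 2"
    using zero_le_power2[of "norm (z - u) - 1"] by (simp add: power2_diff power2_sum)
  finally have "c / 2 * (norm (z - w))\<^sup>2 \<le> c / 2 * (2 * (norm (z - u))\<^sup>2 + 2)"
    using assms(2) by (intro mult_left_mono) auto
  then show ?thesis
    by (simp add: algebra_simps flip: exp_add)
qed

lemma linear_times_gaussian_le:
  fixes c r :: real assumes "c > 0"
  shows "(1 + r) * exp (- c * r\<^sup>2) \<le> exp (1 / (2 * c)) * exp (- (c / 2) * r\<^sup>2)"
proof -
  have "r - (c / 2) * r\<^sup>2 \<le> 1 / (2 * c)"
    using assms zero_le_power2[of "c * r - 1"]
    by (simp add: field_simps power2_diff power2_eq_square)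
  then have "exp r * exp (- c * r\<^sup>2) \<le> exp (1 / (2 * c)) * exp (- (c / 2) * r\<^sup>2)"
    by (simp add: algebra_simps flip: exp_add)
  moreover have "(1 + r) * exp (- c * r\<^sup>2) \<le> exp r * exp (- c * r\<^sup>2)"
    by (intro mult_right_mono) auto
  ultimately show ?thesis by linarith
qed

lemma nn_integral_linear_times_gaussian_le:
  assumes c: "c > 0" and B: "B \<ge> 0"
  shows "(\<integral>\<^sup>+w. ennreal (exp c / pi * exp (- (c / 2) * (cmod (z - w))\<^sup>2)) * ennreal (B * (1 + cmod (z - w))) \<partial>lborel)
    \<le> ennreal (4 * B * exp (c + 1 / c) / c)"
proof -
  have "(\<integral>\<^sup>+w. ennreal (exp c / pi * exp (- (c / 2) * (cmod (z - w))\<^sup>2)) * ennreal (B * (1 + cmod (z - w))) \<partial>lborel)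
      \<le> (\<integral>\<^sup>+w. ennreal (B * exp (c + 1 / c) / pi) * ennreal (exp (- (c / 4) * (cmod (z - w))\<^sup>2)) \<partial>lborel)"
  proof (intro nn_integral_mono)
    fix w
    have "(1 + cmod (z - w)) * exp (- (c / 2) * (cmod (z - w))\<^sup>2) \<le> exp (1 / c) * exp (- (c / 4) * (cmod (z - w))\<^sup>2)"
      using linear_times_gaussian_le[of "c / 2" "cmod (z - w)"] c by simp
    then have "B * exp c / pi * ((1 + cmod (z - w)) * exp (- (c / 2) * (cmod (z - w))\<^sup>2))
        \<le> B * exp c / pi * (exp (1 / c) * exp (- (c / 4) * (cmod (z - w))\<^sup>2))"
      using B by (intro mult_left_mono) auto
    then have real_bound: "exp c / pi * exp (- (c / 2) * (cmod (z - w))\<^sup>2) * (B * (1 + cmod (z - w)))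
        \<le> B * exp (c + 1 / c) / pi * exp (- (c / 4) * (cmod (z - w))\<^sup>2)"
      by (simp add: exp_add mult_ac)
    have "ennreal (exp c / pi * exp (- (c / 2) * (cmod (z - w))\<^sup>2)) * ennreal (B * (1 + cmod (z - w)))
        = ennreal (exp c / pi * exp (- (c / 2) * (cmod (z - w))\<^sup>2) * (B * (1 + cmod (z - w))))"
      using B by (intro ennreal_mult[symmetric] mult_nonneg_nonneg) auto
    also have "\<dots> \<le> ennreal (B * exp (c + 1 / c) / pi * exp (- (c / 4) * (cmod (z - w))\<^sup>2))"
      using real_bound by (rule ennreal_leI)
    also have "\<dots> = ennreal (B * exp (c + 1 / c) / pi) * ennreal (exp (- (c / 4) * (cmod (z - w))\<^sup>2))"
      using B by (intro ennreal_mult) auto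
    finally show "ennreal (exp c / pi * exp (- (c / 2) * (cmod (z - w))\<^sup>2)) * ennreal (B * (1 + cmod (z - w)))
        \<le> ennreal (B * exp (c + 1 / c) / pi) * ennreal (exp (- (c / 4) * (cmod (z - w))\<^sup>2))" .
  qed
  also have "\<dots> = ennreal (B * exp (c + 1 / c) / pi) * ennreal (pi / (c / 4))"
    using c nn_integral_gaussian_translate[of "c / 4" z] by (simp add: nn_integral_cmult)
  also have "\<dots> = ennreal (4 * B * exp (c + 1 / c) / c)"
    using c B by (simp flip: ennreal_mult)
  finally show ?thesis .
qed

text \<open>Spreading a value over the unit disc around \<open>u\<close>: since \<open>|z - u|\<close> and \<open>|z - w|\<close> differ by
  less than 1 there, the Gaussian factor costs only a constant.\<close>

lemma gaussian_le_nn_integral_ball: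
  fixes a c :: real
  assumes "a \<ge> 0" "c \<ge> 0"
  shows "ennreal (a * exp (- c * (cmod (z - u))\<^sup>2))
    \<le> (\<integral>\<^sup>+w\<in>ball u 1. ennreal (exp c / pi * a * exp (- (c / 2) * (cmod (z - w))\<^sup>2)) \<partial>lborel)"
proof -
  have "ennreal (a * exp (- c * (cmod (z - u))\<^sup>2))
      = ennreal (a * exp (- c * (cmod (z - u))\<^sup>2) / pi) * emeasure lborel (ball u 1)"
    using assms by (simp add: emeasure_ball_complex flip: ennreal_mult)
  also have "\<dots> = (\<integral>\<^sup>+w\<in>ball u 1. ennreal (a * exp (- c * (cmod (z - u))\<^sup>2) / pi) \<partial>lborel)"
    by (simp add: nn_integral_cmult_indicator)
  also have "\<dots> \<le> (\<integral>\<^sup>+w\<in>ball u 1. ennreal (exp c / pi * a * exp (- (c / 2) * (cmod (z - w))\<^sup>2)) \<partial>lborel)"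
  proof (intro nn_integral_mono)
    fix w
    have "dist u w < 1 \<Longrightarrow> a * exp (- c * (cmod (z - u))\<^sup>2) / pi \<le> exp c / pi * a * exp (- (c / 2) * (cmod (z - w))\<^sup>2)"
      using mult_left_mono[OF exp_gaussian_shift_le[OF _ assms(2), of u w z] assms(1)]
      by (simp add: divide_right_mono mult_ac)
    then show "ennreal (a * exp (- c * (cmod (z - u))\<^sup>2) / pi) * indicator (ball u 1) w
        \<le> ennreal (exp c / pi * a * exp (- (c / 2) * (cmod (z - w))\<^sup>2)) * indicator (ball u 1) w"
      by (auto simp: indicator_def intro: ennreal_leI)
  qed
  finally show ?thesis .
qed

text \<open>By the previous lemma the Gaussian weight is dominated by an average of unit-disc indicators;
  exchanging the integrals (Tonelli) leaves only the disc masses of \<open>g\<close>.\<close>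

lemma nn_integral_gaussian_le_of_ball_bound:
  fixes g :: "complex \<Rightarrow> real"
  assumes [measurable]: "g \<in> borel_measurable borel" and g: "\<And>u. g u \<ge> 0"
    and c: "c > 0" and B: "B \<ge> 0"
    and ball_bound: "\<And>w. (\<integral>\<^sup>+u\<in>ball w 1. ennreal (g u) \<partial>lborel) \<le> ennreal (B * (1 + cmod (z - w)))"
  shows "(\<integral>\<^sup>+u. ennreal (g u * exp (- c * (cmod (z - u))\<^sup>2)) \<partial>lborel) \<le> ennreal (4 * B * exp (c + 1 / c) / c)"
proof -
  let ?G = "\<lambda>w. exp (- (c / 2) * (cmod (z - w))\<^sup>2)"
  let ?F = "\<lambda>u w. ennreal (exp c / pi * g u * ?G w) * indicator (ball u 1) w"
  have [measurable]: "(\<lambda>(u, w). ?F u w) \<in> borel_measurable (lborel \<Otimes>\<^sub>M lborel)"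
    unfolding indicator_def mem_ball by measurable
  have "(\<integral>\<^sup>+u. ennreal (g u * exp (- c * (cmod (z - u))\<^sup>2)) \<partial>lborel)
      \<le> (\<integral>\<^sup>+u. \<integral>\<^sup>+w. ?F u w \<partial>lborel \<partial>lborel)"
    using c g by (intro nn_integral_mono gaussian_le_nn_integral_ball) auto
  also have "\<dots> = (\<integral>\<^sup>+w. \<integral>\<^sup>+u. ?F u w \<partial>lborel \<partial>lborel)"
    by (rule lborel_pair.Fubini'[symmetric]) measurable
  also have "\<dots> = (\<integral>\<^sup>+w. ennreal (exp c / pi * ?G w) * (\<integral>\<^sup>+u\<in>ball w 1. ennreal (g u) \<partial>lborel) \<partial>lborel)"
  proof (intro nn_integral_cong)
    fix w
    have "?F u w = ennreal (exp c / pi * ?G w) * (ennreal (g u) * indicator (ball w 1) u)" for u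
      using g by (simp add: indicator_def dist_commute mult_ac flip: ennreal_mult)
    then show "(\<integral>\<^sup>+u. ?F u w \<partial>lborel)
        = ennreal (exp c / pi * ?G w) * (\<integral>\<^sup>+u\<in>ball w 1. ennreal (g u) \<partial>lborel)"
      by (simp only:) (rule nn_integral_cmult, unfold indicator_def mem_ball, measurable)
  qed
  also have "\<dots> \<le> (\<integral>\<^sup>+w. ennreal (exp c / pi * ?G w) * ennreal (B * (1 + cmod (z - w))) \<partial>lborel)"
    by (intro nn_integral_mono mult_left_mono ball_bound) auto
  also have "\<dots> \<le> ennreal (4 * B * exp (c + 1 / c) / c)"
    using c B by (rule nn_integral_linear_times_gaussian_le)
  finally show ?thesis .
qed

section \<open>Holomorphic parameter integrals\<close>

lemma sum_exp_series_le_exp: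
  fixes x :: real assumes "x \<ge> 0" "finite I"
  shows "(\<Sum>k\<in>I. x ^ k / fact k) \<le> exp x"
  using sum_le_suminf[OF summable_exp_generic[of x] assms(2)] assms(1)
  by (simp add: exp_def divide_inverse mult.commute)

lemma integral_exp_sums_power_series:
  fixes h q :: "'a \<Rightarrow> complex"
  assumes [measurable]: "h \<in> borel_measurable M" "q \<in> borel_measurable M"
    and dom: "integrable M (\<lambda>w. norm (h w) * exp (norm z * norm (q w)))"
  shows "(\<lambda>n. (\<integral>w. h w * (q w ^ n /\<^sub>R fact n) \<partial>M) * z ^ n) sums (\<integral>w. h w * exp (z * q w) \<partial>M)"
proof -
  define F where "F n w = h w * ((z * q w) ^ n /\<^sub>R fact n)" for n w
  have norm_F: "norm (F n w) = norm (h w) * ((norm z * norm (q w)) ^ n / fact n)" for n w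
    by (simp add: F_def norm_mult norm_power power_mult_distrib divide_inverse)
  have [measurable]: "F n \<in> borel_measurable M" for n
    unfolding F_def by measurable
  have partial_sum_le: "(\<Sum>k\<in>I. norm (F k w)) \<le> norm (h w) * exp (norm z * norm (q w))"
    if "finite I" for I w
    unfolding norm_F sum_distrib_left[symmetric]
    by (intro mult_left_mono sum_exp_series_le_exp that) auto
  have F_integrable: "integrable M (F n)" for n
  proof (rule Bochner_Integration.integrable_bound[OF dom])
    show "AE w in M. norm (F n w) \<le> norm (norm (h w) * exp (norm z * norm (q w)))"
      using partial_sum_le[of "{n}"] by simp
  qed simp
  have "summable (\<lambda>n. \<integral>w. norm (F n w) \<partial>M)"
  proof (rule bounded_imp_summable)
    fix n
    have "(\<Sum>k\<le>n. \<integral>w. norm (F k w) \<partial>M) = (\<integral>w. (\<Sum>k\<le>n. norm (F k w)) \<partial>M)"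
      using F_integrable by (intro Bochner_Integration.integral_sum[symmetric]) auto
    also have "\<dots> \<le> (\<integral>w. norm (h w) * exp (norm z * norm (q w)) \<partial>M)"
      using F_integrable partial_sum_le[of "{..n}"] by (intro integral_mono dom) auto
    finally show "(\<Sum>k\<le>n. \<integral>w. norm (F k w) \<partial>M) \<le> (\<integral>w. norm (h w) * exp (norm z * norm (q w)) \<partial>M)" .
  qed simp
  moreover have "summable (\<lambda>n. norm (F n w))" for w
    unfolding norm_F using summable_exp_generic[of "norm z * norm (q w)"]
    by (intro summable_mult) (simp add: divide_inverse mult.commute)
  ultimately have "(\<lambda>n. integral\<^sup>L M (F n)) sums (\<integral>w. (\<Sum>n. F n w) \<partial>M)"
    by (intro sums_integral F_integrable AE_I2)
  moreover have "(\<Sum>n. F n w) = h w * exp (z * q w)" for w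
    unfolding F_def exp_def by (rule suminf_mult[OF summable_exp_generic])
  moreover have "F n = (\<lambda>w. h w * (q w ^ n /\<^sub>R fact n) * z ^ n)" for n
    by (simp add: F_def fun_eq_iff power_mult_distrib scaleR_conv_of_real mult_ac)
  ultimately show ?thesis by simp
qed

lemma holomorphic_on_integral_exp:
  fixes h q :: "'a \<Rightarrow> complex"
  assumes [measurable]: "h \<in> borel_measurable M" "q \<in> borel_measurable M"
    and "\<And>R. integrable M (\<lambda>w. norm (h w) * exp (R * norm (q w)))"
  shows "(\<lambda>z. \<integral>w. h w * exp (z * q w) \<partial>M) holomorphic_on UNIV"
proof -
  define c where "c n = (\<integral>w. h w * (q w ^ n /\<^sub>R fact n) \<partial>M)" for n
  have power_series: "(\<lambda>n. c n * z ^ n) sums (\<integral>w. h w * exp (z * q w) \<partial>M)" for z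
    unfolding c_def using assms by (intro integral_exp_sums_power_series)
  then have "((\<lambda>z. \<integral>w. h w * exp (z * q w) \<partial>M) has_field_derivative (\<Sum>n. diffs c n * z ^ n)) (at z)"
    for z
    using termdiffs_strong_converges_everywhere[of c z] by (auto simp: sums_iff)
  then show ?thesis
    by (auto simp: holomorphic_on_def field_differentiable_def intro: has_field_derivative_at_within)
qed

section \<open>The Fock space and Toeplitz operators\<close>

lemma completing_square_inner:
  fixes z w :: "'a::real_inner"
  shows "2 * (z \<bullet> w) - (norm w)\<^sup>2 = (norm z)\<^sup>2 - (norm (z - w))\<^sup>2"
  by (simp add: power2_norm_eq_inner inner_diff_left inner_diff_right inner_commute)

lemma norm_fock_kernel: "norm (fock_kernel \<alpha> z w) = exp (\<alpha> * (z \<bullet> w))"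
  by (simp add: fock_kernel_def inner_complex_def algebra_simps)

lemma norm_fock_kernel_mult_exp:
  "norm (fock_kernel \<alpha> z w) * exp (- \<alpha> * (cmod w)\<^sup>2 / 2)
     = exp (\<alpha> * (cmod z)\<^sup>2 / 2 - \<alpha> * (cmod (z - w))\<^sup>2 / 2)"
proof -
  have "\<alpha> * (z \<bullet> w) + - \<alpha> * (cmod w)\<^sup>2 / 2 = \<alpha> * ((norm z)\<^sup>2 - (norm (z - w))\<^sup>2) / 2"
    unfolding completing_square_inner[symmetric] by (simp add: field_simps)
  then show ?thesis by (simp add: norm_fock_kernel diff_divide_distrib right_diff_distrib flip: exp_add)
qed

lemma fock_kernel_mult_cnj:
  "fock_kernel \<alpha> z w * cnj (fock_kernel \<alpha> z w) * exp (- \<alpha> * (cmod w)\<^sup>2)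
     = exp (\<alpha> * (cmod z)\<^sup>2 - \<alpha> * (cmod (z - w))\<^sup>2)"
proof -
  have "2 * (\<alpha> * (z \<bullet> w)) + - \<alpha> * (cmod w)\<^sup>2 = \<alpha> * ((norm z)\<^sup>2 - (norm (z - w))\<^sup>2)"
    unfolding completing_square_inner[symmetric] by (simp add: field_simps)
  then have "(norm (fock_kernel \<alpha> z w))\<^sup>2 * exp (- \<alpha> * (cmod w)\<^sup>2) = exp (\<alpha> * (cmod z)\<^sup>2 - \<alpha> * (cmod (z - w))\<^sup>2)"
    by (simp add: norm_fock_kernel right_diff_distrib flip: exp_add exp_of_nat_mult)
  from arg_cong[OF this, of complex_of_real] show ?thesis
    by (simp only: of_real_mult complex_norm_square)
qed

lemma fock_inf_norm_le:
  "(\<And>z. norm (f z) * exp (- \<alpha> * (cmod z)\<^sup>2 / 2) \<le> B) \<Longrightarrow> fock_inf_norm \<alpha> f \<le> B"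
  unfolding fock_inf_norm_def by (intro cSUP_least) auto

lemma norm_le_fock_inf_norm:
  assumes "f \<in> fock_inf \<alpha>"
  shows "norm (f z) * exp (- \<alpha> * (cmod z)\<^sup>2 / 2) \<le> fock_inf_norm \<alpha> f"
  using assms unfolding fock_inf_def fock_inf_norm_def
  by (auto intro!: cSUP_upper bdd_aboveI2)

lemma fock_inf_norm_nonneg: "f \<in> fock_inf \<alpha> \<Longrightarrow> fock_inf_norm \<alpha> f \<ge> 0"
  by (rule order_trans[OF _ norm_le_fock_inf_norm[of f \<alpha> 0]]) auto

lemma norm_le_fock_inf_norm_mult_exp:
  assumes "f \<in> fock_inf \<alpha>"
  shows "norm (f z) \<le> fock_inf_norm \<alpha> f * exp (\<alpha> * (cmod z)\<^sup>2 / 2)"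
proof -
  have "norm (f z) = norm (f z) * exp (- \<alpha> * (cmod z)\<^sup>2 / 2) * exp (\<alpha> * (cmod z)\<^sup>2 / 2)"
    by (simp add: mult.assoc flip: exp_add)
  also have "\<dots> \<le> fock_inf_norm \<alpha> f * exp (\<alpha> * (cmod z)\<^sup>2 / 2)"
    by (intro mult_right_mono norm_le_fock_inf_norm assms) simp
  finally show ?thesis .
qed

lemma borel_measurable_fock_inf: "f \<in> fock_inf \<alpha> \<Longrightarrow> f \<in> borel_measurable borel"
  unfolding fock_inf_def
  by (auto intro: borel_measurable_continuous_onI holomorphic_on_imp_continuous_on)

lemma fock_kernel_in_fock_inf:
  assumes "\<alpha> > 0"
  shows "fock_kernel \<alpha> z \<in> fock_inf \<alpha>"
    and "fock_inf_norm \<alpha> (fock_kernel \<alpha> z) \<le> exp (\<alpha> * (cmod z)\<^sup>2 / 2)"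
proof -
  have bound: "norm (fock_kernel \<alpha> z w) * exp (- \<alpha> * (cmod w)\<^sup>2 / 2) \<le> exp (\<alpha> * (cmod z)\<^sup>2 / 2)" for w
    unfolding norm_fock_kernel_mult_exp using assms by simp
  have "fock_kernel \<alpha> z holomorphic_on UNIV"
    unfolding fock_kernel_def[abs_def] by (intro holomorphic_intros)
  then show "fock_kernel \<alpha> z \<in> fock_inf \<alpha>"
    unfolding fock_inf_def using bound by blast
  show "fock_inf_norm \<alpha> (fock_kernel \<alpha> z) \<le> exp (\<alpha> * (cmod z)\<^sup>2 / 2)"
    unfolding fock_inf_norm_def by (intro cSUP_least bound) simp
qed

lemma toeplitz_fock_kernel_diagonal:
  "toeplitz \<alpha> \<phi> (fock_kernel \<alpha> z) z = exp (\<alpha> * (cmod z)\<^sup>2) * heat_transform \<alpha> \<phi> 2 z"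
proof -
  have integrand: "toeplitz_integrand \<alpha> \<phi> (fock_kernel \<alpha> z) z
      = (\<lambda>w. of_real (\<alpha> / pi * exp (\<alpha> * (cmod z)\<^sup>2)) * (\<phi> w * of_real (exp (- \<alpha> * 2 * (cmod (z - w))\<^sup>2 / 2))))"
  proof
    fix w
    have "exp (\<alpha> * (cmod z)\<^sup>2 - \<alpha> * (cmod (z - w))\<^sup>2) = exp (\<alpha> * (cmod z)\<^sup>2) * exp (- \<alpha> * 2 * (cmod (z - w))\<^sup>2 / 2)"
      by (simp flip: exp_add)
    then have kernel: "fock_kernel \<alpha> z w * cnj (fock_kernel \<alpha> z w) * exp (- \<alpha> * (cmod w)\<^sup>2)
        = of_real (exp (\<alpha> * (cmod z)\<^sup>2)) * of_real (exp (- \<alpha> * 2 * (cmod (z - w))\<^sup>2 / 2))"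
      by (simp only: fock_kernel_mult_cnj of_real_mult)
    have "toeplitz_integrand \<alpha> \<phi> (fock_kernel \<alpha> z) z w
        = of_real (\<alpha> / pi) * \<phi> w * (fock_kernel \<alpha> z w * cnj (fock_kernel \<alpha> z w) * exp (- \<alpha> * (cmod w)\<^sup>2))"
      by (simp add: toeplitz_integrand_def mult_ac)
    also have "\<dots> = of_real (\<alpha> / pi * exp (\<alpha> * (cmod z)\<^sup>2)) * (\<phi> w * of_real (exp (- \<alpha> * 2 * (cmod (z - w))\<^sup>2 / 2)))"
      unfolding kernel by (simp add: mult_ac)
    finally show "toeplitz_integrand \<alpha> \<phi> (fock_kernel \<alpha> z) z w
        = of_real (\<alpha> / pi * exp (\<alpha> * (cmod z)\<^sup>2)) * (\<phi> w * of_real (exp (- \<alpha> * 2 * (cmod (z - w))\<^sup>2 / 2)))" .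
  qed
  show ?thesis
    unfolding toeplitz_def heat_transform_def integrand integral_mult_right_zero
    by (simp add: mult_ac)
qed

lemma toeplitz_bounded_imp_bounded_heat_transform:
  assumes "\<alpha> > 0" and "toeplitz_bounded_fock_inf \<alpha> \<phi>"
  shows "bounded (range (heat_transform \<alpha> \<phi> 2))"
proof -
  obtain B where B: "\<And>f. f \<in> fock_inf \<alpha> \<Longrightarrow> toeplitz \<alpha> \<phi> f \<in> fock_inf \<alpha> \<and>
      fock_inf_norm \<alpha> (toeplitz \<alpha> \<phi> f) \<le> B * fock_inf_norm \<alpha> f"
    using assms(2) unfolding toeplitz_bounded_fock_inf_def by blast
  have "cmod (heat_transform \<alpha> \<phi> 2 z) \<le> \<bar>B\<bar>" for z
  proof -
    note K = fock_kernel_in_fock_inf[OF assms(1), of z]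
    have "cmod (heat_transform \<alpha> \<phi> 2 z) * exp (\<alpha> * (cmod z)\<^sup>2 / 2)
        = norm (toeplitz \<alpha> \<phi> (fock_kernel \<alpha> z) z) * exp (- \<alpha> * (cmod z)\<^sup>2 / 2)"
      by (simp add: toeplitz_fock_kernel_diagonal norm_mult mult_ac flip: exp_add)
    also have "\<dots> \<le> B * fock_inf_norm \<alpha> (fock_kernel \<alpha> z)"
      using norm_le_fock_inf_norm[OF conjunct1[OF B[OF K(1)]], of z] conjunct2[OF B[OF K(1)]]
      by linarith
    also have "\<dots> \<le> \<bar>B\<bar> * fock_inf_norm \<alpha> (fock_kernel \<alpha> z)"
      using fock_inf_norm_nonneg[OF K(1)] by (intro mult_right_mono) auto
    also have "\<dots> \<le> \<bar>B\<bar> * exp (\<alpha> * (cmod z)\<^sup>2 / 2)"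
      using K(2) by (intro mult_left_mono) auto
    finally show ?thesis by simp
  qed
  then show ?thesis unfolding bounded_iff by blast
qed

lemma norm_toeplitz_integrand_le:
  assumes "\<alpha> > 0" and "norm (f w) \<le> N * exp (\<alpha> * (cmod w)\<^sup>2 / 2)"
  shows "norm (toeplitz_integrand \<alpha> \<phi> f z w)
    \<le> \<alpha> / pi * N * exp (\<alpha> * (cmod z)\<^sup>2 / 2) * (cmod (\<phi> w) * exp (- (\<alpha> / 2) * (cmod (z - w))\<^sup>2))"
proof -
  have "norm (toeplitz_integrand \<alpha> \<phi> f z w)
      = \<alpha> / pi * cmod (\<phi> w) * norm (f w) * norm (fock_kernel \<alpha> z w) * exp (- \<alpha> * (cmod w)\<^sup>2)"
    using assms(1) by (simp add: toeplitz_integrand_def norm_mult norm_divide)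
  also have "\<dots> \<le> \<alpha> / pi * cmod (\<phi> w) * (N * exp (\<alpha> * (cmod w)\<^sup>2 / 2))
      * norm (fock_kernel \<alpha> z w) * exp (- \<alpha> * (cmod w)\<^sup>2)"
    using assms by (intro mult_right_mono mult_left_mono) auto
  also have "\<dots> = \<alpha> / pi * N * cmod (\<phi> w) * (norm (fock_kernel \<alpha> z w) * exp (- \<alpha> * (cmod w)\<^sup>2 / 2))"
    by (simp add: mult_ac flip: exp_add)
  also have "\<dots> = \<alpha> / pi * N * exp (\<alpha> * (cmod z)\<^sup>2 / 2) * (cmod (\<phi> w) * exp (- (\<alpha> / 2) * (cmod (z - w))\<^sup>2))"
    unfolding norm_fock_kernel_mult_exp by (simp add: mult_ac flip: exp_add)
  finally show ?thesis .
qed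

lemma toeplitz_density_exp_growth_le:
  assumes \<alpha>: "\<alpha> > 0" and N: "N \<ge> 0" "norm (f w) \<le> N * exp (\<alpha> * (cmod w)\<^sup>2 / 2)"
  shows "norm (\<phi> w * f w * of_real (\<alpha> / pi * exp (- \<alpha> * (cmod w)\<^sup>2))) * exp (R * norm (of_real \<alpha> * cnj w))
    \<le> \<alpha> / pi * N * exp (\<alpha> * R\<^sup>2) * (cmod (\<phi> w) * exp (- (\<alpha> / 4) * (cmod w)\<^sup>2))"
proof -
  have completing_square: "- \<alpha> * (cmod w)\<^sup>2 / 2 + R * (\<alpha> * cmod w) \<le> \<alpha> * R\<^sup>2 - (\<alpha> / 4) * (cmod w)\<^sup>2"
    using mult_nonneg_nonneg[OF less_imp_le[OF \<alpha>] zero_le_power2[of "cmod w / 2 - R"]]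
    by (simp add: power2_diff power_divide algebra_simps)
  have "norm (\<phi> w * f w * of_real (\<alpha> / pi * exp (- \<alpha> * (cmod w)\<^sup>2))) * exp (R * norm (of_real \<alpha> * cnj w))
      = \<alpha> / pi * cmod (\<phi> w) * norm (f w) * (exp (- \<alpha> * (cmod w)\<^sup>2) * exp (R * (\<alpha> * cmod w)))"
    using \<alpha> by (simp add: norm_mult norm_divide)
  also have "\<dots> \<le> \<alpha> / pi * cmod (\<phi> w) * (N * exp (\<alpha> * (cmod w)\<^sup>2 / 2))
      * (exp (- \<alpha> * (cmod w)\<^sup>2) * exp (R * (\<alpha> * cmod w)))"
    using \<alpha> N by (intro mult_right_mono mult_left_mono) auto
  also have "\<dots> = \<alpha> / pi * N * cmod (\<phi> w) * exp (- \<alpha> * (cmod w)\<^sup>2 / 2 + R * (\<alpha> * cmod w))"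
    by (simp add: mult_ac flip: exp_add)
  also have "\<dots> \<le> \<alpha> / pi * N * cmod (\<phi> w) * exp (\<alpha> * R\<^sup>2 - (\<alpha> / 4) * (cmod w)\<^sup>2)"
    using \<alpha> N completing_square by (intro mult_left_mono) auto
  also have "\<dots> = \<alpha> / pi * N * exp (\<alpha> * R\<^sup>2) * (cmod (\<phi> w) * exp (- (\<alpha> / 4) * (cmod w)\<^sup>2))"
    by (simp add: mult_ac flip: exp_add)
  finally show ?thesis .
qed

lemma toeplitz_holomorphic:
  assumes \<alpha>: "\<alpha> > 0" and [measurable]: "\<phi> \<in> borel_measurable borel" and f: "f \<in> fock_inf \<alpha>"
    and integrable: "integrable lborel (\<lambda>w. cmod (\<phi> w) * exp (- (\<alpha> / 4) * (cmod w)\<^sup>2))"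
  shows "toeplitz \<alpha> \<phi> f holomorphic_on UNIV"
proof -
  define N where "N = fock_inf_norm \<alpha> f"
  have N: "N \<ge> 0" "\<And>w. norm (f w) \<le> N * exp (\<alpha> * (cmod w)\<^sup>2 / 2)"
    unfolding N_def using f by (auto intro: fock_inf_norm_nonneg norm_le_fock_inf_norm_mult_exp)
  define h where "h = (\<lambda>w. \<phi> w * f w * of_real (\<alpha> / pi * exp (- \<alpha> * (cmod w)\<^sup>2)))"
  define q where "q = (\<lambda>w. of_real \<alpha> * cnj w)"
  have [measurable]: "f \<in> borel_measurable borel"
    using f by (rule borel_measurable_fock_inf)
  have [measurable]: "h \<in> borel_measurable borel" "q \<in> borel_measurable borel"
    unfolding h_def q_def by measurable
  have integrand: "toeplitz_integrand \<alpha> \<phi> f z = (\<lambda>w. h w * exp (z * q w))" for z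
    by (simp add: fun_eq_iff toeplitz_integrand_def fock_kernel_def h_def q_def exp_cnj mult_ac)
  have toeplitz_eq: "toeplitz \<alpha> \<phi> f = (\<lambda>z. \<integral>w. h w * exp (z * q w) \<partial>lborel)"
    by (intro ext) (simp only: toeplitz_def integrand)
  show ?thesis
    unfolding toeplitz_eq
  proof (rule holomorphic_on_integral_exp)
    fix R :: real
    let ?D = "\<lambda>w. \<alpha> / pi * N * exp (\<alpha> * R\<^sup>2) * (cmod (\<phi> w) * exp (- (\<alpha> / 4) * (cmod w)\<^sup>2))"
    show "integrable lborel (\<lambda>w. norm (h w) * exp (R * norm (q w)))"
    proof (rule Bochner_Integration.integrable_bound)
      show "integrable lborel ?D"
        using integrable by (rule integrable_mult_right)
      show "AE w in lborel. norm (norm (h w) * exp (R * norm (q w))) \<le> norm (?D w)"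
      proof (rule AE_I2)
        fix w
        have "norm (norm (h w) * exp (R * norm (q w))) = norm (h w) * exp (R * norm (q w))"
          by simp
        also have "\<dots> \<le> ?D w"
          unfolding h_def q_def using \<alpha> N by (rule toeplitz_density_exp_growth_le)
        also have "\<dots> \<le> norm (?D w)"
          by (simp only: real_norm_def abs_ge_self)
        finally show "norm (norm (h w) * exp (R * norm (q w))) \<le> norm (?D w)" .
      qed
    qed measurable
  qed measurable
qed

lemma integrable_toeplitz_integrand:
  assumes \<alpha>: "\<alpha> > 0" and [measurable]: "\<phi> \<in> borel_measurable borel" and f: "f \<in> fock_inf \<alpha>"
    and integrable: "integrable lborel (\<lambda>w. cmod (\<phi> w) * exp (- (\<alpha> / 2) * (cmod (z - w))\<^sup>2))"
  shows "integrable lborel (toeplitz_integrand \<alpha> \<phi> f z)"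
proof (rule Bochner_Integration.integrable_bound)
  let ?D = "\<lambda>w. \<alpha> / pi * fock_inf_norm \<alpha> f * exp (\<alpha> * (cmod z)\<^sup>2 / 2)
      * (cmod (\<phi> w) * exp (- (\<alpha> / 2) * (cmod (z - w))\<^sup>2))"
  show "integrable lborel ?D"
    using integrable by (rule integrable_mult_right)
  have [measurable]: "f \<in> borel_measurable borel"
    using f by (rule borel_measurable_fock_inf)
  show "toeplitz_integrand \<alpha> \<phi> f z \<in> borel_measurable lborel"
    unfolding toeplitz_integrand_def[abs_def] fock_kernel_def by measurable
  show "AE w in lborel. norm (toeplitz_integrand \<alpha> \<phi> f z w) \<le> norm (?D w)"
  proof (rule AE_I2)
    fix w
    have "norm (toeplitz_integrand \<alpha> \<phi> f z w) \<le> ?D w"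
      using \<alpha> norm_le_fock_inf_norm_mult_exp[OF f, of w] by (rule norm_toeplitz_integrand_le)
    then show "norm (toeplitz_integrand \<alpha> \<phi> f z w) \<le> norm (?D w)"
      using abs_ge_self[of "?D w"] by (simp only: real_norm_def)
  qed
qed

lemma norm_toeplitz_le:
  assumes \<alpha>: "\<alpha> > 0" and [measurable]: "\<phi> \<in> borel_measurable borel" and f: "f \<in> fock_inf \<alpha>"
    and integrable: "\<And>z. integrable lborel (\<lambda>w. cmod (\<phi> w) * exp (- (\<alpha> / 2) * (cmod (z - w))\<^sup>2))"
    and bounded: "\<And>z. (\<integral>w. cmod (\<phi> w) * exp (- (\<alpha> / 2) * (cmod (z - w))\<^sup>2) \<partial>lborel) \<le> B"
  shows "norm (toeplitz \<alpha> \<phi> f z) * exp (- \<alpha> * (cmod z)\<^sup>2 / 2) \<le> \<alpha> / pi * B * fock_inf_norm \<alpha> f"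
proof -
  define N where "N = fock_inf_norm \<alpha> f"
  have N: "N \<ge> 0" "\<And>w. norm (f w) \<le> N * exp (\<alpha> * (cmod w)\<^sup>2 / 2)"
    unfolding N_def using f by (auto intro: fock_inf_norm_nonneg norm_le_fock_inf_norm_mult_exp)
  define D where "D w = \<alpha> / pi * N * exp (\<alpha> * (cmod z)\<^sup>2 / 2) * (cmod (\<phi> w) * exp (- (\<alpha> / 2) * (cmod (z - w))\<^sup>2))"
    for w
  have D_bound: "norm (toeplitz_integrand \<alpha> \<phi> f z w) \<le> D w" for w
    unfolding D_def using \<alpha> N(2) by (rule norm_toeplitz_integrand_le)
  have "norm (toeplitz \<alpha> \<phi> f z) \<le> (\<integral>w. D w \<partial>lborel)"
    unfolding toeplitz_def
    using integrable_toeplitz_integrand[OF \<alpha> _ f integrable] integrable D_bound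
    by (intro order_trans[OF integral_norm_bound] integral_mono) (auto simp: D_def)
  also have "\<dots> = \<alpha> / pi * N * exp (\<alpha> * (cmod z)\<^sup>2 / 2)
      * (\<integral>w. cmod (\<phi> w) * exp (- (\<alpha> / 2) * (cmod (z - w))\<^sup>2) \<partial>lborel)"
    unfolding D_def by (rule integral_mult_right_zero)
  also have "\<dots> \<le> \<alpha> / pi * N * exp (\<alpha> * (cmod z)\<^sup>2 / 2) * B"
    using \<alpha> N(1) bounded by (intro mult_left_mono) auto
  finally have "norm (toeplitz \<alpha> \<phi> f z) * exp (- \<alpha> * (cmod z)\<^sup>2 / 2)
      \<le> \<alpha> / pi * N * exp (\<alpha> * (cmod z)\<^sup>2 / 2) * B * exp (- \<alpha> * (cmod z)\<^sup>2 / 2)"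
    by (rule mult_right_mono) simp
  also have "\<dots> = \<alpha> / pi * B * N"
    by (simp add: exp_minus field_simps)
  finally show ?thesis
    by (simp add: N_def)
qed

lemma toeplitz_bounded_fock_infI:
  assumes \<alpha>: "\<alpha> > 0" and [measurable]: "\<phi> \<in> borel_measurable borel"
    and integrable: "\<And>c z. c > 0 \<Longrightarrow> integrable lborel (\<lambda>w. cmod (\<phi> w) * exp (- c * (cmod (z - w))\<^sup>2))"
    and bounded: "\<And>z. (\<integral>w. cmod (\<phi> w) * exp (- (\<alpha> / 2) * (cmod (z - w))\<^sup>2) \<partial>lborel) \<le> B"
  shows "toeplitz_bounded_fock_inf \<alpha> \<phi>"
  unfolding toeplitz_bounded_fock_inf_def
proof (intro exI ballI conjI allI)
  fix f assume f: "f \<in> fock_inf \<alpha>"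
  have integrable_half: "\<And>z. integrable lborel (\<lambda>w. cmod (\<phi> w) * exp (- (\<alpha> / 2) * (cmod (z - w))\<^sup>2))"
    using \<alpha> by (intro integrable) simp
  show "integrable lborel (toeplitz_integrand \<alpha> \<phi> f z)" for z
    using \<alpha> f integrable_half by (intro integrable_toeplitz_integrand) auto
  note weighted_bound = norm_toeplitz_le[OF \<alpha> _ f integrable_half bounded]
  have "toeplitz \<alpha> \<phi> f holomorphic_on UNIV"
    using integrable[of "\<alpha> / 4" 0] \<alpha> by (intro toeplitz_holomorphic f) auto
  then show "toeplitz \<alpha> \<phi> f \<in> fock_inf \<alpha>"
    unfolding fock_inf_def using weighted_bound by auto
  show "fock_inf_norm \<alpha> (toeplitz \<alpha> \<phi> f) \<le> \<alpha> / pi * B * fock_inf_norm \<alpha> f"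
    using weighted_bound by (intro fock_inf_norm_le) auto
qed

section \<open>BMO functions\<close>

locale bmo_function =
  fixes \<phi> :: "complex \<Rightarrow> complex" and C :: real
  assumes locally_integrable: "locally_integrable \<phi>"
    and mean_oscillation_le: "\<And>z. (\<integral>w\<in>ball z 1. cmod (\<phi> w - disc_avg \<phi> 1 z) \<partial>lborel) \<le> C"

lemma BMO_imp_bmo_function:
  assumes "\<phi> \<in> BMO"
  obtains C where "bmo_function \<phi> C"
proof -
  obtain C where C: "\<And>z. (\<integral>w\<in>ball z 1. cmod (\<phi> w - disc_avg \<phi> 1 z) \<partial>lborel) / measure lborel (ball z 1) \<le> C"
    and "locally_integrable \<phi>"
    using assms unfolding BMO_def by blast
  then have "bmo_function \<phi> (C * pi)"
    by unfold_locales (simp_all add: measure_ball_complex divide_le_eq mult.commute)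
  then show ?thesis ..
qed

context bmo_function
begin

abbreviation avg :: "complex \<Rightarrow> complex" where
  "avg \<equiv> disc_avg \<phi> 1"

lemma set_integrable_ball: "set_integrable lborel (ball z r) \<phi>"
proof -
  have "set_integrable lborel (cball z r) \<phi>"
    using locally_integrable unfolding locally_integrable_def by blast
  then show ?thesis
    by (rule set_integrable_subset) auto
qed

lemma borel_measurable [measurable]: "\<phi> \<in> borel_measurable borel"
proof -
  have "(\<lambda>x. indicator (cball 0 (real n)) x *\<^sub>R \<phi> x) \<in> borel_measurable borel" for n
    using borel_measurable_integrable
        [OF locally_integrable[unfolded locally_integrable_def set_integrable_def, rule_format]]
    by simp
  moreover have "(\<lambda>n. indicator (cball 0 (real n)) x *\<^sub>R \<phi> x) \<longlonglongrightarrow> \<phi> x" for x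
  proof (rule tendsto_eventually)
    obtain n where "cmod x \<le> real n" using real_arch_simple by blast
    then show "\<forall>\<^sub>F n in sequentially. indicator (cball 0 (real n)) x *\<^sub>R \<phi> x = \<phi> x"
      by (intro eventually_sequentiallyI[of n]) (auto simp: indicator_def)
  qed
  ultimately show ?thesis
    by (rule borel_measurable_LIMSEQ_metric)
qed

lemma set_integrable_ball_dist: "set_integrable lborel (ball z r) (\<lambda>w. cmod (\<phi> w - k))"
proof -
  have "set_integrable lborel (ball z r) (\<lambda>_. k)"
    unfolding set_integrable_def
    using emeasure_lborel_ball_finite[of z r] by (intro integrable_indicator) auto
  then show ?thesis
    by (intro set_integrable_norm set_integral_diff set_integrable_ball)
qed

lemma C_nonneg: "C \<ge> 0"
  using mean_oscillation_le[of 0] set_integral_nonneg[of "ball 0 1" "\<lambda>w. cmod (\<phi> w - avg 0)" lborel]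
  by fastforce

text \<open>Two averages at distance at most 1/2 are both controlled on the common disc \<open>B(z, 1/2)\<close>.\<close>

lemma norm_avg_diff_le_half:
  assumes "cmod (z - z') \<le> 1 / 2"
  shows "cmod (avg z - avg z') \<le> 8 * C / pi"
proof -
  let ?B = "ball z (1 / 2)"
  have "?B \<subseteq> ball z' 1"
  proof
    fix w assume "w \<in> ?B"
    then show "w \<in> ball z' 1"
      using assms dist_triangle[of z' w z] by (simp add: dist_norm norm_minus_commute)
  qed
  then have sub: "?B \<subseteq> ball z 1" "?B \<subseteq> ball z' 1"
    by auto
  have const_integrable: "set_integrable lborel ?B (\<lambda>_. cmod (avg z - avg z'))"
    unfolding set_integrable_def by (intro integrable_indicator) (auto simp: emeasure_ball_complex)
  have "pi / 4 * cmod (avg z - avg z') = (\<integral>w\<in>?B. cmod (avg z - avg z') \<partial>lborel)"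
    by (subst set_integral_const) (auto simp: emeasure_ball_complex measure_ball_complex power2_eq_square)
  also have "\<dots> \<le> (\<integral>w\<in>?B. cmod (\<phi> w - avg z) + cmod (\<phi> w - avg z') \<partial>lborel)"
  proof (intro set_integral_mono set_integral_add const_integrable set_integrable_ball_dist)
    show "cmod (avg z - avg z') \<le> cmod (\<phi> w - avg z) + cmod (\<phi> w - avg z')" for w
      using norm_triangle_ineq4[of "\<phi> w - avg z'" "\<phi> w - avg z"] by (simp add: norm_minus_commute)
  qed
  also have "\<dots> = (\<integral>w\<in>?B. cmod (\<phi> w - avg z) \<partial>lborel) + (\<integral>w\<in>?B. cmod (\<phi> w - avg z') \<partial>lborel)"
    by (intro set_integral_add set_integrable_ball_dist)
  also have "\<dots> \<le> (\<integral>w\<in>ball z 1. cmod (\<phi> w - avg z) \<partial>lborel) + (\<integral>w\<in>ball z' 1. cmod (\<phi> w - avg z') \<partial>lborel)"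
    using sub by (intro add_mono set_integral_mono_set set_integrable_ball_dist) auto
  also have "\<dots> \<le> 2 * C"
    using mean_oscillation_le[of z] mean_oscillation_le[of z'] by simp
  finally show ?thesis
    by (simp add: field_simps)
qed

lemma norm_avg_diff_le_chain:
  "cmod (z - w) \<le> real n / 2 \<Longrightarrow> cmod (avg z - avg w) \<le> 8 * C / pi * real n"
proof (induction n arbitrary: z)
  case 0
  then show ?case by simp
next
  case (Suc n)
  show ?case
  proof (cases "cmod (z - w) \<le> 1 / 2")
    case True
    then have "cmod (avg z - avg w) \<le> 8 * C / pi"
      by (rule norm_avg_diff_le_half)
    also have "\<dots> \<le> 8 * C / pi * real (Suc n)"
      using C_nonneg mult_left_mono[of 1 "real (Suc n)" "8 * C / pi"] by simp
    finally show ?thesis .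
  next
    case False
    define d where "d = cmod (z - w)"
    define m where "m = z + (1 / (2 * d)) *\<^sub>R (w - z)"
    have d: "d > 1 / 2" using False by (simp add: d_def)
    have "cmod (z - m) = 1 / 2"
      using d by (auto simp: m_def d_def norm_minus_commute)
    then have first_step: "cmod (avg z - avg m) \<le> 8 * C / pi"
      by (intro norm_avg_diff_le_half) simp
    have "m - w = (1 - 1 / (2 * d)) *\<^sub>R (z - w)"
      by (simp add: m_def algebra_simps)
    moreover have "1 - 1 / (2 * d) \<ge> 0"
      using d by (simp add: field_simps)
    ultimately have "cmod (m - w) = (1 - 1 / (2 * d)) * d"
      by (simp add: d_def)
    also have "\<dots> = d - 1 / 2"
      using d by (simp add: field_simps)
    finally have "cmod (avg m - avg w) \<le> 8 * C / pi * real n"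
      using Suc.prems d_def by (intro Suc.IH) simp
    with first_step have "cmod (avg z - avg w) \<le> 8 * C / pi + 8 * C / pi * real n"
      using norm_diff_triangle_le[of "avg z" "avg m" _ "avg w"] by simp
    then show ?thesis
      by (simp add: distrib_left)
  qed
qed

lemma norm_avg_diff_le: "cmod (avg z - avg w) \<le> 8 * C / pi * (1 + 2 * cmod (z - w))"
proof -
  define n where "n = nat \<lceil>2 * cmod (z - w)\<rceil>"
  have "real n = of_int \<lceil>2 * cmod (z - w)\<rceil>"
    unfolding n_def by simp
  then have n: "2 * cmod (z - w) \<le> real n" "real n \<le> 1 + 2 * cmod (z - w)"
    by linarith+
  have "cmod (avg z - avg w) \<le> 8 * C / pi * real n"
    using n(1) by (intro norm_avg_diff_le_chain) simp
  also have "\<dots> \<le> 8 * C / pi * (1 + 2 * cmod (z - w))"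
    using n(2) C_nonneg by (intro mult_left_mono) auto
  finally show ?thesis .
qed

lemma nn_integral_ball_dist_avg_le:
  "(\<integral>\<^sup>+u\<in>ball w 1. ennreal (cmod (\<phi> u - avg z)) \<partial>lborel) \<le> ennreal (16 * C * (1 + cmod (z - w)))"
proof -
  let ?L = "8 * C / pi * (1 + 2 * cmod (z - w))"
  have L: "?L \<ge> 0" "C * (1 + 2 * cmod (z - w)) \<ge> 0"
    using C_nonneg by simp_all
  have "(\<integral>\<^sup>+u\<in>ball w 1. ennreal (cmod (\<phi> u - avg z)) \<partial>lborel)
      \<le> (\<integral>\<^sup>+u\<in>ball w 1. ennreal (cmod (\<phi> u - avg w)) + ennreal ?L \<partial>lborel)"
  proof (intro nn_integral_mono mult_right_mono)
    fix u
    have "cmod (\<phi> u - avg z) \<le> cmod (\<phi> u - avg w) + ?L"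
      using norm_triangle_sub[of "\<phi> u - avg z" "avg w - avg z"] norm_avg_diff_le[of w z]
      by (simp add: norm_minus_commute)
    then show "ennreal (cmod (\<phi> u - avg z)) \<le> ennreal (cmod (\<phi> u - avg w)) + ennreal ?L"
      using L by (simp flip: ennreal_plus)
  qed simp
  also have "\<dots> = (\<integral>\<^sup>+u\<in>ball w 1. ennreal (cmod (\<phi> u - avg w)) \<partial>lborel) + ennreal ?L * emeasure lborel (ball w 1)"
    by (simp add: nn_set_integral_add nn_integral_cmult_indicator)
  also have "\<dots> = ennreal (\<integral>u\<in>ball w 1. cmod (\<phi> u - avg w) \<partial>lborel) + ennreal (?L * pi)"
    using L C_nonneg
    by (simp add: set_nn_integral_eq_set_integral set_integrable_ball_dist emeasure_ball_complex
        flip: ennreal_mult)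
  also have "\<dots> = ennreal ((\<integral>u\<in>ball w 1. cmod (\<phi> u - avg w) \<partial>lborel) + ?L * pi)"
    using L by (intro ennreal_plus[symmetric] set_integral_nonneg) auto
  also have "\<dots> \<le> ennreal (16 * C * (1 + cmod (z - w)))"
    using mean_oscillation_le[of w] C_nonneg by (intro ennreal_leI) (simp add: algebra_simps)
  finally show ?thesis .
qed

lemma nn_integral_dist_avg_gaussian_le:
  assumes "c > 0"
  shows "(\<integral>\<^sup>+u. ennreal (cmod (\<phi> u - avg z) * exp (- c * (cmod (z - u))\<^sup>2)) \<partial>lborel)
    \<le> ennreal (64 * C * exp (c + 1 / c) / c)"
  using nn_integral_gaussian_le_of_ball_bound[of "\<lambda>u. cmod (\<phi> u - avg z)" c "16 * C" z]
    assms C_nonneg nn_integral_ball_dist_avg_le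
  by simp

lemma
  assumes "c > 0"
  shows integrable_dist_avg_gaussian:
      "integrable lborel (\<lambda>w. cmod (\<phi> w - avg z) * exp (- c * (cmod (z - w))\<^sup>2))"
    and integral_dist_avg_gaussian_le:
      "(\<integral>w. cmod (\<phi> w - avg z) * exp (- c * (cmod (z - w))\<^sup>2) \<partial>lborel) \<le> 64 * C * exp (c + 1 / c) / c"
proof -
  note bound = nn_integral_dist_avg_gaussian_le[OF assms, of z]
  show integrable: "integrable lborel (\<lambda>w. cmod (\<phi> w - avg z) * exp (- c * (cmod (z - w))\<^sup>2))"
    using order.strict_trans1[OF bound ennreal_less_top] by (simp add: integrable_iff_bounded abs_mult)
  have "ennreal (\<integral>w. cmod (\<phi> w - avg z) * exp (- c * (cmod (z - w))\<^sup>2) \<partial>lborel)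
      \<le> ennreal (64 * C * exp (c + 1 / c) / c)"
    using bound integrable by (subst nn_integral_eq_integral[symmetric]) auto
  then show "(\<integral>w. cmod (\<phi> w - avg z) * exp (- c * (cmod (z - w))\<^sup>2) \<partial>lborel) \<le> 64 * C * exp (c + 1 / c) / c"
    using assms C_nonneg by simp
qed

lemma
  assumes "c > 0"
  shows integrable_gaussian_weighted:
      "integrable lborel (\<lambda>w. \<phi> w * of_real (exp (- c * (cmod (z - w))\<^sup>2)))"
    and norm_integral_gaussian_weighted_sub_avg_le:
      "cmod ((\<integral>w. \<phi> w * of_real (exp (- c * (cmod (z - w))\<^sup>2)) \<partial>lborel) - of_real (pi / c) * avg z)
         \<le> 64 * C * exp (c + 1 / c) / c"
proof -
  let ?G = "\<lambda>w. exp (- c * (cmod (z - w))\<^sup>2)"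
  have dev: "integrable lborel (\<lambda>w. (\<phi> w - avg z) * of_real (?G w))"
    using integrable_dist_avg_gaussian[OF assms, of z]
    by (subst integrable_norm_iff[symmetric]) (auto simp: norm_mult)
  have const: "integrable lborel (\<lambda>w. avg z * of_real (?G w))"
    using integrable_gaussian_translate[OF assms, of z] by (intro integrable_mult_right integrable_of_real)
  have split: "\<phi> w * of_real (?G w) = (\<phi> w - avg z) * of_real (?G w) + avg z * of_real (?G w)" for w
    by (simp add: algebra_simps)
  show "integrable lborel (\<lambda>w. \<phi> w * of_real (?G w))"
    unfolding split using dev const by (rule Bochner_Integration.integrable_add)
  have "(\<integral>w. \<phi> w * of_real (?G w) \<partial>lborel) - of_real (pi / c) * avg z
      = (\<integral>w. (\<phi> w - avg z) * of_real (?G w) \<partial>lborel)"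
    unfolding split using dev const integral_gaussian_translate[OF assms, of z]
    by simp
  also have "cmod \<dots> \<le> (\<integral>w. cmod (\<phi> w - avg z) * ?G w \<partial>lborel)"
    using integral_norm_bound[of lborel "\<lambda>w. (\<phi> w - avg z) * of_real (?G w)"] by (simp add: norm_mult)
  also have "\<dots> \<le> 64 * C * exp (c + 1 / c) / c"
    using assms by (rule integral_dist_avg_gaussian_le)
  finally show "cmod ((\<integral>w. \<phi> w * of_real (?G w) \<partial>lborel) - of_real (pi / c) * avg z) \<le> 64 * C * exp (c + 1 / c) / c" .
qed

lemma integrable_norm_gaussian_weighted:
  "c > 0 \<Longrightarrow> integrable lborel (\<lambda>w. cmod (\<phi> w) * exp (- c * (cmod (z - w))\<^sup>2))"
  using integrable_norm[OF integrable_gaussian_weighted] by (simp add: norm_mult)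

lemma integral_norm_gaussian_weighted_le:
  assumes "c > 0" and "cmod (avg z) \<le> A"
  shows "(\<integral>w. cmod (\<phi> w) * exp (- c * (cmod (z - w))\<^sup>2) \<partial>lborel) \<le> 64 * C * exp (c + 1 / c) / c + A * (pi / c)"
proof -
  let ?G = "\<lambda>w. exp (- c * (cmod (z - w))\<^sup>2)"
  have "cmod (\<phi> w) * ?G w \<le> (cmod (\<phi> w - avg z) + cmod (avg z)) * ?G w" for w
    using norm_triangle_sub[of "\<phi> w" "avg z"] by (intro mult_right_mono) auto
  then have "(\<integral>w. cmod (\<phi> w) * ?G w \<partial>lborel) \<le> (\<integral>w. cmod (\<phi> w - avg z) * ?G w + cmod (avg z) * ?G w \<partial>lborel)"
    using assms(1)
    by (intro integral_mono Bochner_Integration.integrable_add integrable_mult_right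
        integrable_norm_gaussian_weighted integrable_dist_avg_gaussian integrable_gaussian_translate)
      (auto simp: distrib_right)
  also have "\<dots> = (\<integral>w. cmod (\<phi> w - avg z) * ?G w \<partial>lborel) + cmod (avg z) * (pi / c)"
    using assms(1) integrable_dist_avg_gaussian integrable_gaussian_translate integral_gaussian_translate
    by simp
  also have "\<dots> \<le> 64 * C * exp (c + 1 / c) / c + A * (pi / c)"
    using assms by (intro add_mono integral_dist_avg_gaussian_le mult_right_mono) auto
  finally show ?thesis .
qed

lemma borel_measurable_heat_transform: "heat_transform \<alpha> \<phi> t \<in> borel_measurable lborel"
  unfolding heat_transform_def[abs_def] by measurable

text \<open>The Gaussian in the heat transform has total mass \<open>\<pi> / c\<close> with \<open>c = \<alpha> t / 2\<close>, whence the
  factor \<open>2 / t\<close>.\<close>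

lemma bounded_heat_transform_sub_avg:
  assumes "\<alpha> > 0" and "t > 0"
  shows "bounded (range (\<lambda>z. heat_transform \<alpha> \<phi> t z - of_real (2 / t) * avg z))"
proof -
  define c where "c = \<alpha> * t / 2"
  have c: "c > 0" using assms by (simp add: c_def)
  have "cmod (heat_transform \<alpha> \<phi> t z - of_real (2 / t) * avg z) \<le> \<alpha> / pi * (64 * C * exp (c + 1 / c) / c)"
    for z
  proof -
    have "heat_transform \<alpha> \<phi> t z - of_real (2 / t) * avg z
        = of_real (\<alpha> / pi) * ((\<integral>w. \<phi> w * of_real (exp (- c * (cmod (z - w))\<^sup>2)) \<partial>lborel) - of_real (pi / c) * avg z)"
      using assms by (simp add: heat_transform_def c_def algebra_simps)
    then have "cmod (heat_transform \<alpha> \<phi> t z - of_real (2 / t) * avg z)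
        = \<alpha> / pi * cmod ((\<integral>w. \<phi> w * of_real (exp (- c * (cmod (z - w))\<^sup>2)) \<partial>lborel) - of_real (pi / c) * avg z)"
      using assms by (simp only: norm_mult norm_of_real) simp
    also have "\<dots> \<le> \<alpha> / pi * (64 * C * exp (c + 1 / c) / c)"
      using assms c by (intro mult_left_mono norm_integral_gaussian_weighted_sub_avg_le) auto
    finally show ?thesis .
  qed
  then show ?thesis
    unfolding bounded_iff by blast
qed

lemma bounded_avg_if_Linf_heat_transform:
  assumes "\<alpha> > 0" and "t > 0" and "Linf (heat_transform \<alpha> \<phi> t)"
  shows "bounded (range avg)"
proof -
  obtain K where K: "\<And>z. cmod (heat_transform \<alpha> \<phi> t z - of_real (2 / t) * avg z) \<le> K"
    using bounded_heat_transform_sub_avg[OF assms(1,2)] unfolding bounded_iff by blast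
  obtain M where M: "AE z in lborel. cmod (heat_transform \<alpha> \<phi> t z) \<le> M"
    using assms(3) unfolding Linf_def by blast
  have "cmod (avg z) \<le> t / 2 * (M + K) + 8 * C / pi" for z
  proof -
    obtain z' where z': "z' \<in> ball z (1 / 2)" "cmod (heat_transform \<alpha> \<phi> t z') \<le> M"
      using AE_lborel_imp_ex_in_ball[OF M, of "1 / 2" z] by auto
    have "2 / t * cmod (avg z') = cmod (of_real (2 / t) * avg z')"
      using assms(2) by (simp only: norm_mult norm_of_real) simp
    also have "\<dots> \<le> cmod (heat_transform \<alpha> \<phi> t z') + cmod (heat_transform \<alpha> \<phi> t z' - of_real (2 / t) * avg z')"
      using norm_triangle_ineq4[of "heat_transform \<alpha> \<phi> t z'" "heat_transform \<alpha> \<phi> t z' - of_real (2 / t) * avg z'"]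
      by simp
    also have "\<dots> \<le> M + K"
      using z'(2) K by (rule add_mono)
    finally have "cmod (avg z') \<le> t / 2 * (M + K)"
      using assms(2) by (simp add: field_simps)
    moreover have "cmod (avg z - avg z') \<le> 8 * C / pi"
      using z'(1) by (intro norm_avg_diff_le_half) (simp add: dist_norm)
    ultimately show ?thesis
      using norm_triangle_sub[of "avg z" "avg z'"] by simp
  qed
  then show ?thesis
    unfolding bounded_iff by blast
qed

lemma Linf_heat_transform_if_bounded_avg:
  assumes "\<alpha> > 0" and "t > 0" and "bounded (range avg)"
  shows "Linf (heat_transform \<alpha> \<phi> t)"
proof (rule Linf_if_bounded)
  obtain K where K: "\<And>z. cmod (heat_transform \<alpha> \<phi> t z - of_real (2 / t) * avg z) \<le> K"
    using bounded_heat_transform_sub_avg[OF assms(1,2)] unfolding bounded_iff by blast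
  obtain A where A: "\<And>z. cmod (avg z) \<le> A"
    using assms(3) unfolding bounded_iff by blast
  have "cmod (heat_transform \<alpha> \<phi> t z) \<le> 2 / t * A + K" for z
  proof -
    have "cmod (heat_transform \<alpha> \<phi> t z)
        \<le> cmod (of_real (2 / t) * avg z) + cmod (heat_transform \<alpha> \<phi> t z - of_real (2 / t) * avg z)"
      by (rule norm_triangle_sub)
    also have "cmod (of_real (2 / t) * avg z) = 2 / t * cmod (avg z)"
      using assms(2) by (simp only: norm_mult norm_of_real) simp
    finally show ?thesis
      using K[of z] mult_left_mono[OF A[of z], of "2 / t"] assms(2) by simp
  qed
  then show "bounded (range (heat_transform \<alpha> \<phi> t))"
    unfolding bounded_iff by blast
qed (rule borel_measurable_heat_transform)

lemma toeplitz_bounded_if_bounded_avg: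
  assumes "\<alpha> > 0" and "bounded (range avg)"
  shows "toeplitz_bounded_fock_inf \<alpha> \<phi>"
proof -
  obtain A where "\<And>z. cmod (avg z) \<le> A"
    using assms(2) unfolding bounded_iff by blast
  then have "(\<integral>w. cmod (\<phi> w) * exp (- (\<alpha> / 2) * (cmod (z - w))\<^sup>2) \<partial>lborel)
      \<le> 64 * C * exp (\<alpha> / 2 + 1 / (\<alpha> / 2)) / (\<alpha> / 2) + A * (pi / (\<alpha> / 2))" for z
    using assms(1) by (intro integral_norm_gaussian_weighted_le) auto
  then show ?thesis
    using assms(1) integrable_norm_gaussian_weighted by (intro toeplitz_bounded_fock_infI) auto
qed

end

theorem theorem4p5:
  fixes \<alpha> :: real and \<phi> :: "complex \<Rightarrow> complex"
  assumes "\<alpha> > 0" and "\<phi> \<in> BMO"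
  shows "toeplitz_bounded_fock_inf \<alpha> \<phi> \<longleftrightarrow> (\<forall>t>0. Linf (heat_transform \<alpha> \<phi> t))"
proof -
  obtain C where "bmo_function \<phi> C"
    using assms(2) by (rule BMO_imp_bmo_function)
  then interpret bmo_function \<phi> C .
  have Linf_iff: "Linf (heat_transform \<alpha> \<phi> t) \<longleftrightarrow> bounded (range avg)" if "t > 0" for t
    using bounded_avg_if_Linf_heat_transform[OF assms(1) that]
      Linf_heat_transform_if_bounded_avg[OF assms(1) that] by blast
  show ?thesis
  proof
    assume "toeplitz_bounded_fock_inf \<alpha> \<phi>"
    then have "Linf (heat_transform \<alpha> \<phi> 2)"
      using assms(1) by (intro Linf_if_bounded borel_measurable_heat_transform toeplitz_bounded_imp_bounded_heat_transform)
    then show "\<forall>t>0. Linf (heat_transform \<alpha> \<phi> t)"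
      using Linf_iff by simp
  next
    assume "\<forall>t>0. Linf (heat_transform \<alpha> \<phi> t)"
    then show "toeplitz_bounded_fock_inf \<alpha> \<phi>"
      using assms(1) Linf_iff[of 1] by (intro toeplitz_bounded_if_bounded_avg) auto
  qed
qed

end
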